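(* Let $n,k,d$ be positive integers such that $k^{1/d}$ is an integer. Then $\textsc{sub-pmm}_{n,k}$ is solvable by monotone formulas of size at most $k n^{d k^{1/d}}$ of each of the following types: (I) $\Sigma_{2d}$ formulas with $\bigwedge$-fan-in $k^{1/d}$ (and $\bigvee$-fan-in $n^{k^{1/d}}$); (II) $\Sigma_{d+1}$ formulas, and also $\Pi_{d+1}$ formulas (with fan-in $k^{1/d}n^{k^{1/d}}$).
   Context: An $AC^0$ formula on variables $X_1,\dots,X_N$ is a rooted tree whose leaves are labeled by a constant $0$ or $1$ or a literal $X_i$ or $\neg X_i$ and whose non-leaves (gates) are labeled by $\bigwedge$ or $\bigvee$ (unbounded fan-in). It is monotone if no leaf is labeled $\neg X_i$. Size is the number of leaves labeled by literals; depth is the maximum number of gates on a root-to-leaf path; fan-in (resp. $\bigwedge$-fan-in, $\bigvee$-fan-in) is the maximum number of children of any gate (resp. $\bigwedge$-gate, $\bigvee$-gate). Depth-$0$ formulas (literals) are both $\Sigma_0$ and $\Pi_0$ formulas. For $d\ge1$, a $\Sigma_d$ formula (resp. $\Pi_d$ formula) is either a $\Pi_{d-1}$ formula (resp. $\Sigma_{d-1}$ formula) or a depth-$d$ formula whose output gate is labeled $\bigvee$ (resp. $\bigwedge$). $\textsc{sub-pmm}_{n,k}$: the input is $k$ Boolean matrices $M^{(1)},\dots,M^{(k)}\in\{0,1\}^{n\times n}$ ($kn^2$ variables). A sub-permutation matrix is a $0/1$ matrix with at most one $1$ in each row and column. A formula solves $\textsc{sub-pmm}_{n,k}$ if on every input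 where all $M^{(i)}$ are sub-permutation matrices it outputs $\bigvee_{a_1,\dots,a_{k-1}\in[n]} M^{(1)}_{1,a_1}\wedge M^{(2)}_{a_1,a_2}\wedge\cdots\wedge M^{(k)}_{a_{k-1},1}$. *)

theory Defs
  imports Main
begin

text \<open>AC0 formulas: rooted trees. Leaves are constants or literals (Lit True v = X_v,
  Lit False v = negated X_v); gates are unbounded fan-in AND / OR, children given as a list.\<close>

datatype 'v ac0 = Const bool | Lit bool 'v | And "'v ac0 list" | Or "'v ac0 list"

fun eval :: "('v \<Rightarrow> bool) \<Rightarrow> 'v ac0 \<Rightarrow> bool" where
  "eval \<rho> (Const b) = b"
| "eval \<rho> (Lit p v) = (if p then \<rho> v else \<not> \<rho> v)"
| "eval \<rho> (And fs) = (\<forall>f\<in>set fs. eval \<rho> f)"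
| "eval \<rho> (Or fs) = (\<exists>f\<in>set fs. eval \<rho> f)"

fun vars :: "'v ac0 \<Rightarrow> 'v set" where
  "vars (Const b) = {}"
| "vars (Lit p v) = {v}"
| "vars (And fs) = (\<Union>f\<in>set fs. vars f)"
| "vars (Or fs) = (\<Union>f\<in>set fs. vars f)"

fun monotone_ac0 :: "'v ac0 \<Rightarrow> bool" where
  "monotone_ac0 (Const b) = True"
| "monotone_ac0 (Lit p v) = p"
| "monotone_ac0 (And fs) = (\<forall>f\<in>set fs. monotone_ac0 f)"
| "monotone_ac0 (Or fs) = (\<forall>f\<in>set fs. monotone_ac0 f)"

fun fsize :: "'v ac0 \<Rightarrow> nat" where
  "fsize (Const b) = 0"
| "fsize (Lit p v) = 1"
| "fsize (And fs) = sum_list (map fsize fs)"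
| "fsize (Or fs) = sum_list (map fsize fs)"

fun depth :: "'v ac0 \<Rightarrow> nat" where
  "depth (Const b) = 0"
| "depth (Lit p v) = 0"
| "depth (And fs) = Suc (fold max (map depth fs) 0)"
| "depth (Or fs) = Suc (fold max (map depth fs) 0)"

fun and_fanin :: "'v ac0 \<Rightarrow> nat" where
  "and_fanin (Const b) = 0"
| "and_fanin (Lit p v) = 0"
| "and_fanin (And fs) = fold max (map and_fanin fs) (length fs)"
| "and_fanin (Or fs) = fold max (map and_fanin fs) 0"

fun or_fanin :: "'v ac0 \<Rightarrow> nat" where
  "or_fanin (Const b) = 0"
| "or_fanin (Lit p v) = 0"
| "or_fanin (And fs) = fold max (map or_fanin fs) 0"
| "or_fanin (Or fs) = fold max (map or_fanin fs) (length fs)"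

definition fanin :: "'v ac0 \<Rightarrow> nat" where
  "fanin F = max (and_fanin F) (or_fanin F)"

fun is_Or :: "'v ac0 \<Rightarrow> bool" where
  "is_Or (Or fs) = True"
| "is_Or _ = False"

fun is_And :: "'v ac0 \<Rightarrow> bool" where
  "is_And (And fs) = True"
| "is_And _ = False"

fun is_Sigma :: "nat \<Rightarrow> 'v ac0 \<Rightarrow> bool" and is_Pi :: "nat \<Rightarrow> 'v ac0 \<Rightarrow> bool" where
  "is_Sigma 0 F = (depth F = 0)"
| "is_Pi 0 F = (depth F = 0)"
| "is_Sigma (Suc d) F = (is_Pi d F \<or> (depth F = Suc d \<and> is_Or F))"
| "is_Pi (Suc d) F = (is_Sigma d F \<or> (depth F = Suc d \<and> is_And F))"

text \<open>SUB-PMM_{n,k}. Variable (i, a, b) stands for M^(i)_{a,b}, 1 <= i <= k, 1 <= a,b <= n.\<close>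
type_synonym pvar = "nat \<times> nat \<times> nat"

definition pmm_vars :: "nat \<Rightarrow> nat \<Rightarrow> pvar set" where
  "pmm_vars n k = {1..k} \<times> {1..n} \<times> {1..n}"

definition sub_perm_input :: "nat \<Rightarrow> nat \<Rightarrow> (pvar \<Rightarrow> bool) \<Rightarrow> bool" where
  "sub_perm_input n k \<rho> \<longleftrightarrow>
     (\<forall>i\<in>{1..k}. \<forall>a\<in>{1..n}. \<forall>b\<in>{1..n}. \<forall>c\<in>{1..n}.
        (\<rho> (i, a, b) \<and> \<rho> (i, a, c) \<longrightarrow> b = c) \<and>
        (\<rho> (i, b, a) \<and> \<rho> (i, c, a) \<longrightarrow> b = c))"

definition pmm_value :: "nat \<Rightarrow> nat \<Rightarrow> (pvar \<Rightarrow> bool) \<Rightarrow> bool" where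
  "pmm_value n k \<rho> \<longleftrightarrow>
     (\<exists>a :: nat \<Rightarrow> nat. a 0 = 1 \<and> a k = 1 \<and> (\<forall>j\<in>{1..<k}. a j \<in> {1..n}) \<and>
        (\<forall>i\<in>{1..k}. \<rho> (i, a (i - 1), a i)))"

definition solves_sub_pmm :: "nat \<Rightarrow> nat \<Rightarrow> pvar ac0 \<Rightarrow> bool" where
  "solves_sub_pmm n k F \<longleftrightarrow> vars F \<subseteq> pmm_vars n k \<and>
     (\<forall>\<rho>. sub_perm_input n k \<rho> \<longrightarrow> eval \<rho> F = pmm_value n k \<rho>)"

end

theory Submission
  imports Defs
begin

text \<open>
  The value of SUB-PMM is the existence of a walk from 1 to 1 whose \<open>i\<close>-th step is an edge
  of \<open>M\<^sup>(\<^sup>i\<^sup>)\<close> and whose intermediate vertices lie in \<open>[n]\<close>. Write \<open>k = m\<^sup>d\<close> and cut the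
  \<open>k\<close> steps into \<open>m\<close> blocks of \<open>m\<^sup>d\<^sup>-\<^sup>1\<close> consecutive steps: a walk exists iff for some
  intermediate vertices \<open>c\<^sub>1, \<dots>, c\<^sub>m\<^sub>-\<^sub>1\<close> every block has a walk between consecutive \<open>c\<close>'s.
  This is an OR of \<open>n\<^sup>m\<^sup>-\<^sup>1\<close> ANDs of \<open>m\<close> block formulas; iterating it \<open>d\<close> times gives a
  \<open>\<Sigma>\<^sub>2\<^sub>d\<close> formula of size \<open>(m n\<^sup>m\<^sup>-\<^sup>1)\<^sup>d \<le> k n\<^sup>d\<^sup>m\<close>.

  For sub-permutation matrices every block relation is a partial function, and then the walk
  also has a CNF: the first step leads somewhere, and for every \<open>z\<close> it leads to some
  \<open>z' \<noteq> z\<close> or the rest of the walk succeeds from \<open>z\<close>. Unfolded, this CNF has fewer than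
  \<open>n\<^sup>m\<close> clauses of width at most \<open>m n\<close>, and its size is at most \<open>m n\<^sup>m\<close> times the block size.
  Alternating DNF and CNF from level to level, adjacent gates of equal type merge, so every
  level adds only one to the depth; this gives the \<open>\<Sigma>\<^sub>d\<^sub>+\<^sub>1\<close> and \<open>\<Pi>\<^sub>d\<^sub>+\<^sub>1\<close> formulas.
\<close>

lemma sum_list_concat: "sum_list (concat xss) = (\<Sum>xs\<leftarrow>xss. sum_list xs :: 'a :: monoid_add)"
  by (induction xss) auto

lemma sum_list_le_length_mult:
  "(\<And>x. x \<in> set xs \<Longrightarrow> f x \<le> c) \<Longrightarrow> (\<Sum>x\<leftarrow>xs. f x) \<le> length xs * (c :: nat)"
  by (induction xs) (auto intro: add_mono)

section \<open>Walks through a list of step relations\<close>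

fun walk :: "'a set \<Rightarrow> ('a \<Rightarrow> 'a \<Rightarrow> bool) list \<Rightarrow> 'a \<Rightarrow> 'a \<Rightarrow> bool" where
  "walk V [] x y \<longleftrightarrow> x = y"
| "walk V (R # Rs) x y \<longleftrightarrow> (\<exists>z\<in>V. R x z \<and> walk V Rs z y)"

lemma walk_append:
  "x \<in> V \<Longrightarrow> walk V (Rs @ Ss) x y \<longleftrightarrow> (\<exists>z\<in>V. walk V Rs x z \<and> walk V Ss z y)"
  by (induction Rs arbitrary: x) auto

lemma walk_concat:
  "x \<in> V \<Longrightarrow> walk V (concat Rss) x y \<longleftrightarrow> walk V (map (walk V) Rss) x y"
  by (induction Rss arbitrary: x) (auto simp: walk_append)

lemma walk_map_cong:
  assumes "\<And>j u v. j \<in> set js \<Longrightarrow> u \<in> V \<Longrightarrow> v \<in> V \<Longrightarrow> R j u v = S j u v" and "x \<in> V"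
  shows "walk V (map R js) x y \<longleftrightarrow> walk V (map S js) x y"
  using assms by (induction js arbitrary: x) auto

lemma upt_blocks: "[s..<s + m * L] = concat (map (\<lambda>j. [s + j * L..<s + j * L + L]) [0..<m])"
proof (induction m)
  case (Suc m)
  have "[s..<s + Suc m * L] = [s..<s + m * L] @ [s + m * L..<s + m * L + L]"
    using upt_add_eq_append[of s "s + m * L" L] by (simp add: algebra_simps)
  then show ?case using Suc by simp
qed simp

lemma walk_upt_blocks:
  assumes "\<And>s u v. u \<in> V \<Longrightarrow> v \<in> V \<Longrightarrow> Q s u v \<longleftrightarrow> walk V (map R [s..<s + L]) u v"
    and "x \<in> V"
  shows "walk V (map (\<lambda>j. Q (s + j * L)) [0..<m]) x y \<longleftrightarrow> walk V (map R [s..<s + m * L]) x y"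
proof -
  have "walk V (map (\<lambda>j. Q (s + j * L)) [0..<m]) x y
      \<longleftrightarrow> walk V (map (\<lambda>j. walk V (map R [s + j * L..<s + j * L + L])) [0..<m]) x y"
    using assms by (intro walk_map_cong) auto
  also have "\<dots> \<longleftrightarrow> walk V (map R [s..<s + m * L]) x y"
    using assms(2) by (simp add: upt_blocks map_concat walk_concat o_def)
  finally show ?thesis .
qed

definition functional_on :: "'a set \<Rightarrow> ('a \<Rightarrow> 'a \<Rightarrow> bool) \<Rightarrow> bool" where
  "functional_on V R \<longleftrightarrow> (\<forall>x\<in>V. \<forall>y\<in>V. \<forall>z\<in>V. R x y \<longrightarrow> R x z \<longrightarrow> y = z)"

lemma functional_on_walk:
  "(\<And>R. R \<in> set Rs \<Longrightarrow> functional_on V R) \<Longrightarrow> functional_on V (walk V Rs)"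
  unfolding functional_on_def by (induction Rs) (simp, metis list.set_intros walk.simps(2))

lemma walk_Cons_functional:
  assumes "functional_on V R" "x \<in> V"
  shows "walk V (R # Rs) x y \<longleftrightarrow>
    (\<exists>z\<in>V. R x z) \<and> (\<forall>z\<in>V. (\<exists>z'\<in>V. z' \<noteq> z \<and> R x z') \<or> walk V Rs z y)"
  using assms unfolding functional_on_def by auto metis

lemma walk_singleton_set: "walk {v} Rs v v \<longleftrightarrow> (\<forall>R\<in>set Rs. R v v)"
  by (induction Rs) auto

section \<open>DNF and CNF of a walk\<close>

fun walk_terms :: "'a list \<Rightarrow> ('a \<Rightarrow> 'a \<Rightarrow> 'x) list \<Rightarrow> 'a \<Rightarrow> 'a \<Rightarrow> 'x list list" where
  "walk_terms V [] x y = (if x = y then [[]] else [])"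
| "walk_terms V (G # Gs) x y = concat (map (\<lambda>z. map (Cons (G x z)) (walk_terms V Gs z y)) V)"

lemma bex_walk_terms_iff_walk:
  "(\<exists>t\<in>set (walk_terms V Gs x y). \<forall>g\<in>set t. P g) \<longleftrightarrow> walk (set V) (map (\<lambda>G u v. P (G u v)) Gs) x y"
  by (induction Gs arbitrary: x) auto

lemma length_walk_term: "t \<in> set (walk_terms V Gs x y) \<Longrightarrow> length t = length Gs"
  by (induction Gs arbitrary: x t) (auto split: if_splits)

lemma walk_term_elem:
  "t \<in> set (walk_terms V Gs x y) \<Longrightarrow> g \<in> set t \<Longrightarrow>
    \<exists>G\<in>set Gs. \<exists>u\<in>insert x (set V). \<exists>v\<in>set V. g = G u v"
proof (induction Gs arbitrary: x t)
  case (Cons G Gs)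
  then obtain z t' where z: "z \<in> set V" "t' \<in> set (walk_terms V Gs z y)" "t = G x z # t'"
    by auto
  then show ?case using Cons.prems(2) Cons.IH[OF z(2)] by auto
qed (simp split: if_splits)

lemma length_walk_terms:
  assumes "distinct V"
  shows "length (walk_terms V Gs x y) \<le> length V ^ (length Gs - 1)"
proof (induction Gs arbitrary: x)
  case (Cons G Gs)
  show ?case
  proof (cases Gs)
    case Nil
    have "length (walk_terms V [G] x y) = length (filter (\<lambda>z. z = y) V)"
      by (induction V) auto
    also have "\<dots> \<le> 1"
      using assms by (simp add: distinct_length_filter card_le_Suc0_iff_eq)
    finally show ?thesis using Nil by simp
  next
    case (Cons G' Gs')
    have "length (walk_terms V (G # Gs) x y) = (\<Sum>z\<leftarrow>V. length (walk_terms V Gs z y))"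
      by (simp add: length_concat o_def)
    also have "\<dots> \<le> (\<Sum>z\<leftarrow>V. length V ^ (length Gs - 1))"
      using Cons.IH by (intro sum_list_mono) auto
    also have "\<dots> = length V ^ (length (G # Gs) - 1)"
      using Cons by (simp add: sum_list_triv)
    finally show ?thesis .
  qed
qed simp

text \<open>
  Correct only for steps that are partial functions on \<open>V\<close>: the first clause says that the
  first step leads somewhere, and the clauses for \<open>z\<close> say that it leads to a vertex other
  than \<open>z\<close> or that the rest of the walk succeeds from \<open>z\<close>.
\<close>

fun walk_clauses :: "'a list \<Rightarrow> ('a \<Rightarrow> 'a \<Rightarrow> 'x) list \<Rightarrow> 'a \<Rightarrow> 'a \<Rightarrow> 'x list list" where
  "walk_clauses V [] x y = (if x = y then [] else [[]])"
| "walk_clauses V [G] x y = [[G x y]]"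
| "walk_clauses V (G # Gs) x y =
     map (G x) V # concat (map (\<lambda>z. map (\<lambda>c. map (G x) (removeAll z V) @ c) (walk_clauses V Gs z y)) V)"

lemma ball_walk_clauses_iff_walk:
  assumes "\<And>G. G \<in> set Gs \<Longrightarrow> functional_on (set V) (\<lambda>u v. P (G u v))" "x \<in> set V" "y \<in> set V"
  shows "(\<forall>c\<in>set (walk_clauses V Gs x y). \<exists>g\<in>set c. P g) \<longleftrightarrow> walk (set V) (map (\<lambda>G u v. P (G u v)) Gs) x y"
  using assms
proof (induction V Gs x y rule: walk_clauses.induct)
  case (3 V G G' Gs x y)
  let ?Rs = "map (\<lambda>G u v. P (G u v)) (G' # Gs)"
  have "(\<forall>c\<in>set (walk_clauses V (G # G' # Gs) x y). \<exists>g\<in>set c. P g) \<longleftrightarrow>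
      (\<exists>z\<in>set V. P (G x z)) \<and> (\<forall>z\<in>set V. \<forall>c\<in>set (walk_clauses V (G' # Gs) z y).
         (\<exists>z'\<in>set V. z' \<noteq> z \<and> P (G x z')) \<or> (\<exists>g\<in>set c. P g))"
    by (simp add: bex_Un) blast
  also have "\<dots> \<longleftrightarrow>
      (\<exists>z\<in>set V. P (G x z)) \<and> (\<forall>z\<in>set V. (\<exists>z'\<in>set V. z' \<noteq> z \<and> P (G x z')) \<or> walk (set V) ?Rs z y)"
    using "3" by (auto simp del: walk.simps)
  also have "\<dots> \<longleftrightarrow> walk (set V) (map (\<lambda>G u v. P (G u v)) (G # G' # Gs)) x y"
    using "3.prems" by (simp only: list.map(2) walk_Cons_functional list.set_intros)
  finally show ?case .
qed auto

lemma walk_clause_elem: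
  "c \<in> set (walk_clauses V Gs x y) \<Longrightarrow> g \<in> set c \<Longrightarrow>
    \<exists>G\<in>set Gs. \<exists>u\<in>insert x (set V). \<exists>v\<in>insert y (set V). g = G u v"
proof (induction V Gs x y arbitrary: c rule: walk_clauses.induct)
  case (3 V G G' Gs x y)
  then consider "c = map (G x) V"
    | z c' where "z \<in> set V" "c' \<in> set (walk_clauses V (G' # Gs) z y)"
        "c = map (G x) (removeAll z V) @ c'"
    by auto
  then show ?case
  proof cases
    case 2
    show ?thesis
    proof (cases "g \<in> set c'")
      case True
      then obtain G'' u v where "G'' \<in> set (G' # Gs)" "u \<in> insert z (set V)" "v \<in> insert y (set V)"
          "g = G'' u v"
        using "3.IH"[OF 2(1,2) True] by blast
      then show ?thesis using 2(1) by (intro bexI[of _ G''] bexI[of _ u] bexI[of _ v]) auto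
    qed (use 2(3) "3.prems"(2) in auto)
  qed (use "3.prems" in auto)
qed (auto split: if_splits)

lemma length_walk_clause:
  "V \<noteq> [] \<Longrightarrow> c \<in> set (walk_clauses V Gs x y) \<Longrightarrow> length c \<le> length Gs * length V"
proof (induction V Gs x y arbitrary: c rule: walk_clauses.induct)
  case (3 V G G' Gs x y)
  then consider "c = map (G x) V"
    | z c' where "z \<in> set V" "c' \<in> set (walk_clauses V (G' # Gs) z y)" "c = map (G x) (removeAll z V) @ c'"
    by auto
  then show ?case
  proof cases
    case 2
    then show ?thesis using "3.IH"[OF 2(1) "3.prems"(1) 2(2)] length_removeAll_less_eq[of z V]
      by (simp del: length_removeAll_less_eq)
  qed simp
qed (auto simp: Suc_le_eq split: if_splits)

lemma length_walk_clauses: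
  assumes "V \<noteq> []" "Gs \<noteq> []"
  shows "(length V - 1) * length (walk_clauses V Gs x y) + 1 = length V ^ length Gs"
  using assms
proof (induction V Gs x y rule: walk_clauses.induct)
  case (3 V G G' Gs x y)
  let ?n = "length V" and ?c = "\<lambda>z. length (walk_clauses V (G' # Gs) z y)"
  have "(?n - 1) * length (walk_clauses V (G # G' # Gs) x y) + 1 = (?n - 1) + 1 + (\<Sum>z\<leftarrow>V. (?n - 1) * ?c z)"
    by (simp add: length_concat o_def sum_list_const_mult)
  also have "\<dots> = (\<Sum>z\<leftarrow>V. (?n - 1) * ?c z + 1)"
    using "3.prems"(1) by (simp add: sum_list_Suc)
  also have "\<dots> = (\<Sum>z\<leftarrow>V. ?n ^ length (G' # Gs))"
    using "3" by (intro arg_cong[where f = sum_list] map_cong) auto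
  also have "\<dots> = ?n ^ length (G # G' # Gs)"
    by (simp add: sum_list_triv)
  finally show ?case .
qed (auto simp: Suc_le_eq)

lemma walk_clauses_weight:
  assumes "V \<noteq> []" "x \<in> set V" "y \<in> set V"
    and "\<And>G u v. G \<in> set Gs \<Longrightarrow> u \<in> set V \<Longrightarrow> v \<in> set V \<Longrightarrow> w (G u v) \<le> S"
  shows "(\<Sum>c\<leftarrow>walk_clauses V Gs x y. \<Sum>g\<leftarrow>c. w g) \<le> length Gs * length V ^ length Gs * S"
  using assms
proof (induction V Gs x y rule: walk_clauses.induct)
  case (2 V G x y)
  then show ?case by (cases V) (auto simp: trans_le_add1)
next
  case (3 V G G' Gs x y)
  let ?n = "length V" and ?m = "length (G' # Gs)" and ?cl = "\<lambda>z. walk_clauses V (G' # Gs) z y"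
  let ?dev = "\<lambda>z. \<Sum>z'\<leftarrow>removeAll z V. w (G x z')"
  have dev: "?dev z \<le> (?n - 1) * S" if "z \<in> set V" for z
  proof -
    have "?dev z \<le> length (removeAll z V) * S"
      using "3.prems"(2,4) by (intro sum_list_le_length_mult) simp
    also have "length (removeAll z V) \<le> ?n - 1"
      using length_removeAll_less[OF that] by simp
    finally show ?thesis by simp
  qed
  have "(\<Sum>c\<leftarrow>walk_clauses V (G # G' # Gs) x y. \<Sum>g\<leftarrow>c. w g)
      = (\<Sum>z\<leftarrow>V. w (G x z) + (length (?cl z) * ?dev z + (\<Sum>c\<leftarrow>?cl z. \<Sum>g\<leftarrow>c. w g)))"
    by (simp add: sum_list_addf map_concat sum_list_concat o_def sum_list_triv)
  also have "\<dots> \<le> (\<Sum>z\<leftarrow>V. S + (length (?cl z) * ((?n - 1) * S) + ?m * ?n ^ ?m * S))"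
    using "3" dev by (intro sum_list_mono add_mono mult_le_mono) simp_all
  also have "\<dots> = (\<Sum>z\<leftarrow>V. ((?n - 1) * length (?cl z) + 1) * S + ?m * ?n ^ ?m * S)"
    by (simp add: algebra_simps)
  also have "\<dots> = (\<Sum>z\<leftarrow>V. ?n ^ ?m * S + ?m * ?n ^ ?m * S)"
    by (simp only: length_walk_clauses[OF "3.prems"(1) list.distinct(2)])
  also have "\<dots> = length (G # G' # Gs) * ?n ^ length (G # G' # Gs) * S"
    by (simp add: sum_list_triv algebra_simps)
  finally show ?case .
qed simp

lemma walk_terms_weight:
  assumes "distinct V" "x \<in> set V"
    and "\<And>G u v. G \<in> set Gs \<Longrightarrow> u \<in> set V \<Longrightarrow> v \<in> set V \<Longrightarrow> w (G u v) \<le> S"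
  shows "(\<Sum>t\<leftarrow>walk_terms V Gs x y. \<Sum>g\<leftarrow>t. w g) \<le> length V ^ (length Gs - 1) * length Gs * S"
proof -
  have "(\<Sum>t\<leftarrow>walk_terms V Gs x y. \<Sum>g\<leftarrow>t. w g) \<le> length (walk_terms V Gs x y) * (length Gs * S)"
  proof (intro sum_list_le_length_mult)
    fix t assume t: "t \<in> set (walk_terms V Gs x y)"
    show "(\<Sum>g\<leftarrow>t. w g) \<le> length Gs * S"
      using sum_list_le_length_mult[of t w S] walk_term_elem[OF t] assms(2,3) length_walk_term[OF t]
      by fastforce
  qed
  also have "\<dots> \<le> length V ^ (length Gs - 1) * (length Gs * S)"
    using length_walk_terms[OF assms(1)] by (rule mult_right_mono) simp
  finally show ?thesis by (simp add: mult.assoc)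
qed

lemma length_walk_clauses_le:
  assumes "2 \<le> length V" "Gs \<noteq> []"
  shows "length (walk_clauses V Gs x y) \<le> length V ^ length Gs"
proof -
  have "1 \<le> length V - 1"
    using assms(1) by linarith
  then have "length (walk_clauses V Gs x y) \<le> (length V - 1) * length (walk_clauses V Gs x y)"
    using mult_le_mono1 by fastforce
  also have "\<dots> < length V ^ length Gs"
    using length_walk_clauses[OF _ assms(2), of V x y] assms(1) by fastforce
  finally show ?thesis by simp
qed

lemma length_concat_walk_term:
  assumes "t \<in> set (walk_terms V Gs x y)" "\<And>G u v. G \<in> set Gs \<Longrightarrow> length (G u v) \<le> B"
  shows "length (concat t) \<le> length Gs * B"
proof -
  have "length (concat t) \<le> length t * B"
    unfolding length_concat using walk_term_elem[OF assms(1)] assms(2)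
    by (intro sum_list_le_length_mult) fastforce
  then show ?thesis using length_walk_term[OF assms(1)] by simp
qed

lemma length_concat_walk_clause:
  assumes "V \<noteq> []" "c \<in> set (walk_clauses V Gs x y)" "\<And>G u v. G \<in> set Gs \<Longrightarrow> length (G u v) \<le> B"
  shows "length (concat c) \<le> length Gs * length V * B"
proof -
  have "length (concat c) \<le> length c * B"
    unfolding length_concat using walk_clause_elem[OF assms(2)] assms(3)
    by (intro sum_list_le_length_mult) fastforce
  also have "\<dots> \<le> length Gs * length V * B"
    using length_walk_clause[OF assms(1,2)] by (rule mult_right_mono) simp
  finally show ?thesis .
qed

lemma walk_terms_blocks_elem:
  assumes "t \<in> set (walk_terms V (map (\<lambda>j. F (s + j * L)) [0..<m]) x y)" "g \<in> set t"
  obtains j u v where "j < m" "u \<in> insert x (set V)" "v \<in> set V" "g = F (s + j * L) u v"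
proof -
  from walk_term_elem[OF assms] obtain G u v
    where "G \<in> set (map (\<lambda>j. F (s + j * L)) [0..<m])" "u \<in> insert x (set V)" "v \<in> set V" "g = G u v"
    by blast
  moreover from this(1) obtain j where "j < m" "G = F (s + j * L)"
    by auto
  ultimately show thesis by (intro that[of j u v]) auto
qed

lemma walk_clauses_blocks_elem:
  assumes "c \<in> set (walk_clauses V (map (\<lambda>j. F (s + j * L)) [0..<m]) x y)" "g \<in> set c"
  obtains j u v where "j < m" "u \<in> insert x (set V)" "v \<in> insert y (set V)" "g = F (s + j * L) u v"
proof -
  from walk_clause_elem[OF assms] obtain G u v
    where "G \<in> set (map (\<lambda>j. F (s + j * L)) [0..<m])" "u \<in> insert x (set V)" "v \<in> insert y (set V)"
      "g = G u v"
    by blast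
  moreover from this(1) obtain j where "j < m" "G = F (s + j * L)"
    by auto
  ultimately show thesis by (intro that[of j u v]) auto
qed

lemma upt_block_subset: "j < m \<Longrightarrow> {s + j * L..<s + j * L + L} \<subseteq> {s..<s + m * (L :: nat)}"
proof -
  assume "j < m"
  then have "j * L + L \<le> m * L"
    using mult_le_mono1[of "Suc j" m L] by simp
  then show ?thesis by auto
qed

lemma fold_max_le_iff [simp]: "fold max xs z \<le> (B :: 'a :: linorder) \<longleftrightarrow> z \<le> B \<and> (\<forall>x\<in>set xs. x \<le> B)"
  by (induction xs arbitrary: z) auto

lemma eval_cong: "(\<And>v. v \<in> vars F \<Longrightarrow> \<rho> v = \<rho>' v) \<Longrightarrow> eval \<rho> F = eval \<rho>' F"
  by (induction F) auto

definition monotone_over :: "'v set \<Rightarrow> 'v ac0 \<Rightarrow> bool" where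
  "monotone_over A F \<longleftrightarrow> monotone_ac0 F \<and> vars F \<subseteq> A"

lemma monotone_over_simps [simp]:
  "monotone_over A (Const b)"
  "monotone_over A (Lit p v) \<longleftrightarrow> p \<and> v \<in> A"
  "monotone_over A (And fs) \<longleftrightarrow> (\<forall>f\<in>set fs. monotone_over A f)"
  "monotone_over A (Or fs) \<longleftrightarrow> (\<forall>f\<in>set fs. monotone_over A f)"
  by (auto simp: monotone_over_def)

lemma monotone_over_mono: "monotone_over A F \<Longrightarrow> A \<subseteq> B \<Longrightarrow> monotone_over B F"
  by (auto simp: monotone_over_def)

text \<open>\<open>is_Sigma\<close> and \<open>is_Pi\<close> demand the exact depth, so shallower formulas are padded with unary gates.\<close>

primrec pad_Or :: "nat \<Rightarrow> 'v ac0 \<Rightarrow> 'v ac0" where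
  "pad_Or 0 F = F"
| "pad_Or (Suc i) F = Or [pad_Or i F]"

primrec pad_And :: "nat \<Rightarrow> 'v ac0 \<Rightarrow> 'v ac0" where
  "pad_And 0 F = F"
| "pad_And (Suc i) F = And [pad_And i F]"

lemma pad_Or_simps [simp]:
  "eval \<rho> (pad_Or i F) = eval \<rho> F"
  "vars (pad_Or i F) = vars F"
  "monotone_ac0 (pad_Or i F) = monotone_ac0 F"
  "fsize (pad_Or i F) = fsize F"
  "depth (pad_Or i F) = depth F + i"
  "and_fanin (pad_Or i F) = and_fanin F"
  by (induction i) auto

lemma pad_And_simps [simp]:
  "eval \<rho> (pad_And i F) = eval \<rho> F"
  "vars (pad_And i F) = vars F"
  "monotone_ac0 (pad_And i F) = monotone_ac0 F"
  "fsize (pad_And i F) = fsize F"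
  "depth (pad_And i F) = depth F + i"
  "or_fanin (pad_And i F) = or_fanin F"
  by (induction i) auto

lemma or_fanin_pad_Or: "or_fanin F \<le> B \<Longrightarrow> 1 \<le> B \<Longrightarrow> or_fanin (pad_Or i F) \<le> B"
  by (induction i) auto

lemma and_fanin_pad_And: "and_fanin F \<le> B \<Longrightarrow> 1 \<le> B \<Longrightarrow> and_fanin (pad_And i F) \<le> B"
  by (induction i) auto

lemma solves_sub_pmm_pad [simp]:
  "solves_sub_pmm n k (pad_Or i F) \<longleftrightarrow> solves_sub_pmm n k F"
  "solves_sub_pmm n k (pad_And i F) \<longleftrightarrow> solves_sub_pmm n k F"
  by (simp_all add: solves_sub_pmm_def)

lemma is_Sigma_pad_Or:
  assumes "depth F \<le> S" "is_Or F \<or> depth F < S"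
  shows "is_Sigma S (pad_Or (S - depth F) F)"
proof (cases S)
  case (Suc S')
  have "is_Or (pad_Or (S - depth F) F)"
    using assms(2) by (cases "S - depth F") auto
  then show ?thesis using assms(1) Suc by simp
qed (use assms in simp)

lemma is_Pi_pad_And:
  assumes "depth F \<le> S" "is_And F \<or> depth F < S"
  shows "is_Pi S (pad_And (S - depth F) F)"
proof (cases S)
  case (Suc S')
  have "is_And (pad_And (S - depth F) F)"
    using assms(2) by (cases "S - depth F") auto
  then show ?thesis using assms(1) Suc by simp
qed (use assms in simp)

section \<open>SUB-PMM as a walk\<close>

definition matrix_rel :: "(pvar \<Rightarrow> bool) \<Rightarrow> nat \<Rightarrow> nat \<Rightarrow> nat \<Rightarrow> bool" where
  "matrix_rel \<rho> i x y \<longleftrightarrow> \<rho> (i, x, y)"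

lemma walk_iff_vertex_sequence:
  assumes "y \<in> V"
  shows "walk V Rs x y \<longleftrightarrow> (\<exists>a. a 0 = x \<and> a (length Rs) = y \<and> (\<forall>j\<in>{1..<length Rs}. a j \<in> V)
    \<and> (\<forall>i<length Rs. (Rs ! i) (a i) (a (Suc i))))"
proof (induction Rs arbitrary: x)
  case Nil
  show ?case by auto
next
  case (Cons R Rs)
  let ?seq = "\<lambda>z a. a 0 = z \<and> a (length Rs) = y \<and> (\<forall>j\<in>{1..<length Rs}. a j \<in> V)
    \<and> (\<forall>i<length Rs. (Rs ! i) (a i) (a (Suc i)))"
  have "walk V (R # Rs) x y \<longleftrightarrow> (\<exists>z\<in>V. R x z \<and> (\<exists>a. ?seq z a))"
    using Cons.IH by simp
  also have "\<dots> \<longleftrightarrow> (\<exists>a. a 0 = x \<and> a (length (R # Rs)) = y \<and> (\<forall>j\<in>{1..<length (R # Rs)}. a j \<in> V)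
      \<and> (\<forall>i<length (R # Rs). ((R # Rs) ! i) (a i) (a (Suc i))))" (is "_ \<longleftrightarrow> (\<exists>a. ?P a)")
  proof
    assume "\<exists>z\<in>V. R x z \<and> (\<exists>a. ?seq z a)"
    then obtain z a where "z \<in> V" "R x z" "?seq z a"
      by blast
    moreover from this have "a j \<in> V" if "j < length Rs" for j
      using that by (cases j) auto
    ultimately have "?P (case_nat x a)"
      by (auto simp: less_Suc_eq_0_disj split: nat.split)
    then show "\<exists>a. ?P a"
      by blast
  next
    assume "\<exists>a. ?P a"
    then obtain a where a: "?P a" ..
    then have "a 1 \<in> V"
      using assms by (cases Rs) auto
    moreover have "?seq (a 1) (a \<circ> Suc)"
      using a by auto
    ultimately show "\<exists>z\<in>V. R x z \<and> (\<exists>a. ?seq z a)"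
      using a by (intro bexI[of _ "a 1"]) auto
  qed
  finally show ?case .
qed

lemma pmm_value_iff_walk:
  assumes "n \<ge> 1"
  shows "pmm_value n k \<rho> \<longleftrightarrow> walk {1..n} (map (matrix_rel \<rho>) [1..<k + 1]) 1 1"
proof -
  have "(\<forall>i\<in>{1..k}. \<rho> (i, a (i - 1), a i)) \<longleftrightarrow> (\<forall>i<k. \<rho> (Suc i, a i, a (Suc i)))" for a
    unfolding image_Suc_lessThan[symmetric] by auto
  then show ?thesis
    using walk_iff_vertex_sequence[of 1 "{1..n}" "map (matrix_rel \<rho>) [1..<k + 1]" 1] assms
    by (simp add: pmm_value_def matrix_rel_def del: upt_Suc)
qed

lemma solves_sub_pmm_if_walk:
  assumes "n \<ge> 1" "monotone_over (pmm_vars n k) F"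
    and "\<And>\<rho>. (\<And>i. functional_on {1..n} (matrix_rel \<rho> i)) \<Longrightarrow>
      eval \<rho> F \<longleftrightarrow> walk {1..n} (map (matrix_rel \<rho>) [1..<k + 1]) 1 1"
  shows "monotone_ac0 F \<and> solves_sub_pmm n k F"
proof -
  have "eval \<rho> F = pmm_value n k \<rho>" if "sub_perm_input n k \<rho>" for \<rho>
  proof -
    \<comment> \<open>Outside \<open>pmm_vars\<close> the input is unconstrained; switching those variables off makes every matrix functional.\<close>
    define \<rho>' where "\<rho>' v \<longleftrightarrow> \<rho> v \<and> v \<in> pmm_vars n k" for v
    have "functional_on {1..n} (matrix_rel \<rho>' i)" for i
      using that unfolding functional_on_def matrix_rel_def \<rho>'_def pmm_vars_def sub_perm_input_def
      by blast
    then have "eval \<rho>' F \<longleftrightarrow> walk {1..n} (map (matrix_rel \<rho>') [1..<k + 1]) 1 1"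
      by (rule assms(3))
    also have "\<dots> \<longleftrightarrow> walk {1..n} (map (matrix_rel \<rho>) [1..<k + 1]) 1 1"
      using assms(1) by (intro walk_map_cong) (auto simp: matrix_rel_def \<rho>'_def pmm_vars_def)
    also have "\<dots> \<longleftrightarrow> pmm_value n k \<rho>"
      using pmm_value_iff_walk[OF assms(1)] by simp
    finally show ?thesis
      using assms(2) eval_cong[of F \<rho> \<rho>'] by (auto simp: \<rho>'_def monotone_over_def)
  qed
  then show ?thesis
    using assms(2) by (simp add: solves_sub_pmm_def monotone_over_def)
qed

section \<open>The iterated DNF\<close>

primrec dnf_tower :: "nat \<Rightarrow> nat \<Rightarrow> nat list \<Rightarrow> nat \<Rightarrow> nat \<Rightarrow> nat \<Rightarrow> pvar ac0" where
  "dnf_tower 0 m V s x y = Lit True (s, x, y)"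
| "dnf_tower (Suc l) m V s x y =
     Or (map And (walk_terms V (map (\<lambda>j. dnf_tower l m V (s + j * m ^ l)) [0..<m]) x y))"

lemma eval_dnf_tower:
  "x \<in> set V \<Longrightarrow> y \<in> set V \<Longrightarrow>
    eval \<rho> (dnf_tower l m V s x y) \<longleftrightarrow> walk (set V) (map (matrix_rel \<rho>) [s..<s + m ^ l]) x y"
proof (induction l arbitrary: s x y)
  case (Suc l)
  have "eval \<rho> (dnf_tower (Suc l) m V s x y) \<longleftrightarrow>
      walk (set V) (map (\<lambda>j u v. eval \<rho> (dnf_tower l m V (s + j * m ^ l) u v)) [0..<m]) x y"
    using bex_walk_terms_iff_walk[of V _ x y "eval \<rho>"] by (simp add: o_def)
  also have "\<dots> \<longleftrightarrow> walk (set V) (map (matrix_rel \<rho>) [s..<s + m ^ Suc l]) x y"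
    unfolding power_Suc using Suc by (intro walk_upt_blocks) auto
  finally show ?case .
qed (simp add: matrix_rel_def)

lemma monotone_over_dnf_tower:
  "x \<in> set V \<Longrightarrow> y \<in> set V \<Longrightarrow>
    monotone_over ({s..<s + m ^ l} \<times> set V \<times> set V) (dnf_tower l m V s x y)"
proof (induction l arbitrary: s x y)
  case (Suc l)
  let ?A = "{s..<s + m ^ Suc l} \<times> set V \<times> set V"
  have "monotone_over ?A (dnf_tower l m V (s + j * m ^ l) u v)"
    if "j < m" "u \<in> set V" "v \<in> set V" for j u v
  proof (rule monotone_over_mono[OF Suc.IH[OF that(2,3)]])
    show "{s + j * m ^ l..<s + j * m ^ l + m ^ l} \<times> set V \<times> set V \<subseteq> ?A"
      using upt_block_subset[OF that(1), of s "m ^ l"] by auto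
  qed
  then show ?case
    using Suc.prems by (auto elim!: walk_terms_blocks_elem)
qed simp

lemma fsize_dnf_tower:
  assumes "distinct V" "x \<in> set V"
  shows "fsize (dnf_tower l m V s x y) \<le> (m * length V ^ (m - 1)) ^ l"
  using assms(2)
proof (induction l arbitrary: s x y)
  case (Suc l)
  let ?Gs = "map (\<lambda>j. dnf_tower l m V (s + j * m ^ l)) [0..<m]"
  have "(\<Sum>t\<leftarrow>walk_terms V ?Gs x y. \<Sum>g\<leftarrow>t. fsize g)
      \<le> length V ^ (length ?Gs - 1) * length ?Gs * (m * length V ^ (m - 1)) ^ l"
    using Suc.IH by (intro walk_terms_weight[OF assms(1) Suc.prems]) auto
  then show ?case by (simp add: o_def algebra_simps)
qed simp

lemma depth_dnf_tower: "depth (dnf_tower l m V s x y) \<le> 2 * l"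
proof (induction l arbitrary: s x y)
  case (Suc l)
  then show ?case by (auto elim: walk_terms_blocks_elem)
qed simp

lemma fanin_dnf_tower:
  assumes "distinct V"
  shows "and_fanin (dnf_tower l m V s x y) \<le> m \<and> or_fanin (dnf_tower l m V s x y) \<le> length V ^ (m - 1)"
proof (induction l arbitrary: s x y)
  case (Suc l)
  then show ?case
    using length_walk_terms[OF assms, of "map (\<lambda>j. dnf_tower l m V (s + j * m ^ l)) [0..<m]" x y]
    by (auto elim: walk_terms_blocks_elem dest: length_walk_term)
qed simp

section \<open>Alternating DNF and CNF\<close>

text \<open>
  \<open>Or (sigma_children l \<dots>)\<close> is the \<open>\<Sigma>\<^sub>l\<^sub>+\<^sub>1\<close> and \<open>And (pi_children l \<dots>)\<close> the \<open>\<Pi>\<^sub>l\<^sub>+\<^sub>1\<close> formula.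
  Building the AND gates of a DNF level directly from the clauses of the CNF blocks (and dually)
  is what merges gates of equal type.
\<close>

fun sigma_children :: "nat \<Rightarrow> nat \<Rightarrow> nat list \<Rightarrow> nat \<Rightarrow> nat \<Rightarrow> nat \<Rightarrow> pvar ac0 list"
  and pi_children :: "nat \<Rightarrow> nat \<Rightarrow> nat list \<Rightarrow> nat \<Rightarrow> nat \<Rightarrow> nat \<Rightarrow> pvar ac0 list" where
  "sigma_children 0 m V s x y = [Lit True (s, x, y)]"
| "sigma_children (Suc l) m V s x y =
     map (\<lambda>t. And (concat t)) (walk_terms V (map (\<lambda>j. pi_children l m V (s + j * m ^ l)) [0..<m]) x y)"
| "pi_children 0 m V s x y = [Lit True (s, x, y)]"
| "pi_children (Suc l) m V s x y =
     map (\<lambda>c. Or (concat c)) (walk_clauses V (map (\<lambda>j. sigma_children l m V (s + j * m ^ l)) [0..<m]) x y)"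

lemma eval_sigma_pi_children:
  assumes "\<And>i. functional_on (set V) (matrix_rel \<rho> i)" "x \<in> set V" "y \<in> set V"
  shows "(eval \<rho> (Or (sigma_children l m V s x y)) \<longleftrightarrow> walk (set V) (map (matrix_rel \<rho>) [s..<s + m ^ l]) x y)
    \<and> (eval \<rho> (And (pi_children l m V s x y)) \<longleftrightarrow> walk (set V) (map (matrix_rel \<rho>) [s..<s + m ^ l]) x y)"
  using assms(2,3)
proof (induction l arbitrary: s x y)
  case (Suc l)
  let ?walk = "\<lambda>s u v. walk (set V) (map (matrix_rel \<rho>) [s..<s + m ^ l]) u v"
  have "eval \<rho> (Or (sigma_children (Suc l) m V s x y)) \<longleftrightarrow>
      walk (set V) (map (\<lambda>j u v. eval \<rho> (And (pi_children l m V (s + j * m ^ l) u v))) [0..<m]) x y"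
    using bex_walk_terms_iff_walk[of V _ x y "\<lambda>fs. eval \<rho> (And fs)"] by (simp add: o_def)
  also have "\<dots> \<longleftrightarrow> walk (set V) (map (matrix_rel \<rho>) [s..<s + m ^ Suc l]) x y"
    unfolding power_Suc using Suc by (intro walk_upt_blocks) auto
  finally have sigma: "eval \<rho> (Or (sigma_children (Suc l) m V s x y)) \<longleftrightarrow>
      walk (set V) (map (matrix_rel \<rho>) [s..<s + m ^ Suc l]) x y" .
  have "functional_on (set V) (?walk s')" for s'
    using assms(1) by (intro functional_on_walk) auto
  then have "functional_on (set V) (\<lambda>u v. eval \<rho> (Or (sigma_children l m V s' u v)))" for s'
    using Suc.IH unfolding functional_on_def by auto
  then have "(\<forall>c\<in>set (walk_clauses V (map (\<lambda>j. sigma_children l m V (s + j * m ^ l)) [0..<m]) x y).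
        \<exists>g\<in>set c. eval \<rho> (Or g)) \<longleftrightarrow>
      walk (set V) (map (\<lambda>G u v. eval \<rho> (Or (G u v))) (map (\<lambda>j. sigma_children l m V (s + j * m ^ l)) [0..<m])) x y"
    by (intro ball_walk_clauses_iff_walk Suc.prems) auto
  then have "eval \<rho> (And (pi_children (Suc l) m V s x y)) \<longleftrightarrow>
      walk (set V) (map (\<lambda>j u v. eval \<rho> (Or (sigma_children l m V (s + j * m ^ l) u v))) [0..<m]) x y"
    by (simp add: o_def)
  also have "\<dots> \<longleftrightarrow> walk (set V) (map (matrix_rel \<rho>) [s..<s + m ^ Suc l]) x y"
    unfolding power_Suc using Suc by (intro walk_upt_blocks) auto
  finally show ?case using sigma by blast
qed (simp add: matrix_rel_def)

lemma monotone_over_sigma_pi_children: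
  assumes "x \<in> set V" "y \<in> set V"
  shows "(\<forall>f\<in>set (sigma_children l m V s x y). monotone_over ({s..<s + m ^ l} \<times> set V \<times> set V) f)
    \<and> (\<forall>f\<in>set (pi_children l m V s x y). monotone_over ({s..<s + m ^ l} \<times> set V \<times> set V) f)"
  using assms
proof (induction l arbitrary: s x y)
  case (Suc l)
  let ?A = "{s..<s + m ^ Suc l} \<times> set V \<times> set V"
  have blocks: "(\<forall>f\<in>set (sigma_children l m V (s + j * m ^ l) u v). monotone_over ?A f)
      \<and> (\<forall>f\<in>set (pi_children l m V (s + j * m ^ l) u v). monotone_over ?A f)"
    if "j < m" "u \<in> set V" "v \<in> set V" for j u v
  proof -
    have "{s + j * m ^ l..<s + j * m ^ l + m ^ l} \<times> set V \<times> set V \<subseteq> ?A"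
      using upt_block_subset[OF that(1), of s "m ^ l"] by auto
    then show ?thesis
      using Suc.IH[OF that(2,3), of "s + j * m ^ l"] by (auto elim: monotone_over_mono)
  qed
  show ?case
    using Suc.prems blocks
    by (auto elim!: walk_terms_blocks_elem walk_clauses_blocks_elem)
qed simp

lemma fsize_sigma_pi_children:
  assumes "distinct V" "x \<in> set V" "y \<in> set V"
  shows "(\<Sum>f\<leftarrow>sigma_children l m V s x y. fsize f) \<le> (m * length V ^ m) ^ l
    \<and> (\<Sum>f\<leftarrow>pi_children l m V s x y. fsize f) \<le> (m * length V ^ m) ^ l"
  using assms(2,3)
proof (induction l arbitrary: s x y)
  case (Suc l)
  let ?n = "length V" and ?B = "(m * length V ^ m) ^ l"
  let ?Pis = "map (\<lambda>j. pi_children l m V (s + j * m ^ l)) [0..<m]"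
  have "(\<Sum>f\<leftarrow>sigma_children (Suc l) m V s x y. fsize f) =
      (\<Sum>t\<leftarrow>walk_terms V ?Pis x y. \<Sum>fs\<leftarrow>t. \<Sum>f\<leftarrow>fs. fsize f)"
    by (simp add: o_def map_concat sum_list_concat)
  also have "\<dots> \<le> ?n ^ (length ?Pis - 1) * length ?Pis * ?B"
    using Suc.IH by (intro walk_terms_weight[OF assms(1) Suc.prems(1)]) auto
  also have "\<dots> \<le> ?n ^ m * m * ?B"
  proof -
    have "?n ^ (m - 1) \<le> ?n ^ m"
      using length_pos_if_in_set[OF Suc.prems(1)] by (intro power_increasing) (auto simp: Suc_le_eq)
    then show ?thesis by (simp add: mult_right_mono)
  qed
  finally have sigma: "(\<Sum>f\<leftarrow>sigma_children (Suc l) m V s x y. fsize f) \<le> (m * ?n ^ m) ^ Suc l"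
    by (simp add: algebra_simps)
  have "(\<Sum>f\<leftarrow>pi_children (Suc l) m V s x y. fsize f) =
      (\<Sum>c\<leftarrow>walk_clauses V (map (\<lambda>j. sigma_children l m V (s + j * m ^ l)) [0..<m]) x y. \<Sum>fs\<leftarrow>c. \<Sum>f\<leftarrow>fs. fsize f)"
    by (simp add: o_def map_concat sum_list_concat)
  also have "\<dots> \<le> length (map (\<lambda>j. sigma_children l m V (s + j * m ^ l)) [0..<m])
      * ?n ^ length (map (\<lambda>j. sigma_children l m V (s + j * m ^ l)) [0..<m]) * ?B"
    using Suc.IH Suc.prems by (intro walk_clauses_weight) auto
  finally have pi: "(\<Sum>f\<leftarrow>pi_children (Suc l) m V s x y. fsize f) \<le> (m * ?n ^ m) ^ Suc l"
    by (simp add: algebra_simps)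
  show ?case using sigma pi ..
qed simp

lemma depth_sigma_pi_children:
  "(\<forall>f\<in>set (sigma_children l m V s x y). depth f \<le> l) \<and> (\<forall>f\<in>set (pi_children l m V s x y). depth f \<le> l)"
proof (induction l arbitrary: s x y)
  case (Suc l)
  then show ?case by (auto elim!: walk_terms_blocks_elem walk_clauses_blocks_elem)
qed simp

lemma fanin_sigma_pi_children:
  assumes "distinct V" "2 \<le> length V" "1 \<le> m"
  shows "(\<forall>f\<in>set (sigma_children l m V s x y). and_fanin f \<le> m * length V ^ m \<and> or_fanin f \<le> m * length V ^ m)
    \<and> length (sigma_children l m V s x y) \<le> length V ^ (m - 1)
    \<and> (\<forall>f\<in>set (pi_children l m V s x y). and_fanin f \<le> m * length V ^ m \<and> or_fanin f \<le> m * length V ^ m)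
    \<and> length (pi_children l m V s x y) \<le> length V ^ m"
proof (induction l arbitrary: s x y)
  case 0
  have "1 \<le> length V ^ (m - 1)" "1 \<le> length V ^ m"
    using assms(2) by simp_all
  then show ?case by simp
next
  case (Suc l)
  let ?n = "length V" and ?W = "m * length V ^ m"
  let ?Pis = "map (\<lambda>j. pi_children l m V (s + j * m ^ l)) [0..<m]"
  let ?Sigmas = "map (\<lambda>j. sigma_children l m V (s + j * m ^ l)) [0..<m]"
  have kids: "and_fanin g \<le> ?W \<and> or_fanin g \<le> ?W"
    if "g \<in> set (sigma_children l m V s' u v) \<or> g \<in> set (pi_children l m V s' u v)" for g s' u v
    using Suc.IH that by blast
  have "and_fanin (And (concat t)) \<le> ?W \<and> or_fanin (And (concat t)) \<le> ?W"
    if t: "t \<in> set (walk_terms V ?Pis x y)" for t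
  proof -
    have "length (concat t) \<le> ?W"
      using length_concat_walk_term[OF t, of "?n ^ m"] Suc.IH by auto
    then show ?thesis
      using kids by (auto elim!: walk_terms_blocks_elem[OF t])
  qed
  moreover have "and_fanin (Or (concat c)) \<le> ?W \<and> or_fanin (Or (concat c)) \<le> ?W"
    if c: "c \<in> set (walk_clauses V ?Sigmas x y)" for c
  proof -
    have "length (concat c) \<le> m * ?n * ?n ^ (m - 1)"
      using length_concat_walk_clause[OF _ c, of "?n ^ (m - 1)"] Suc.IH assms(2) by fastforce
    also have "\<dots> = ?W"
      using assms(3) power_minus_mult[of m ?n] by (simp add: algebra_simps)
    finally show ?thesis
      using kids by (auto elim!: walk_clauses_blocks_elem[OF c])
  qed
  moreover have "length (walk_terms V ?Pis x y) \<le> ?n ^ (m - 1)"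
    using length_walk_terms[OF assms(1), of ?Pis x y] by simp
  moreover have "length (walk_clauses V ?Sigmas x y) \<le> ?n ^ m"
    using length_walk_clauses_le[OF assms(2), of ?Sigmas x y] assms(3) by simp
  ultimately show ?case by auto
qed

section \<open>The case \<open>n = 1\<close>\<close>

text \<open>
  For \<open>n = 1\<close> the CNF of a block has \<open>m\<close> clauses, so merging gives AND fan-in \<open>m\<^sup>2\<close>. But then
  the only variables are \<open>M\<^sup>(\<^sup>i\<^sup>)\<^sub>1\<^sub>,\<^sub>1\<close>, and a balanced AND tree of all of them does.
\<close>

primrec and_tree :: "nat \<Rightarrow> nat \<Rightarrow> nat \<Rightarrow> pvar ac0" where
  "and_tree 0 m s = Lit True (s, 1, 1)"
| "and_tree (Suc l) m s = And (map (\<lambda>j. and_tree l m (s + j * m ^ l)) [0..<m])"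

lemma eval_and_tree: "eval \<rho> (and_tree l m s) \<longleftrightarrow> walk {1} (map (matrix_rel \<rho>) [s..<s + m ^ l]) 1 1"
proof (induction l arbitrary: s)
  case (Suc l)
  have "eval \<rho> (and_tree (Suc l) m s) \<longleftrightarrow>
      walk {1 :: nat} (map (\<lambda>j u v. eval \<rho> (and_tree l m (s + j * m ^ l))) [0..<m]) 1 1"
    by (simp add: walk_singleton_set)
  also have "\<dots> \<longleftrightarrow> walk {1} (map (matrix_rel \<rho>) [s..<s + m ^ Suc l]) 1 1"
    unfolding power_Suc using Suc by (intro walk_upt_blocks) auto
  finally show ?case .
qed (simp add: matrix_rel_def)

lemma monotone_over_and_tree: "monotone_over ({s..<s + m ^ l} \<times> {1} \<times> {1}) (and_tree l m s)"
proof (induction l arbitrary: s)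
  case (Suc l)
  have "monotone_over ({s..<s + m ^ Suc l} \<times> {1} \<times> {1}) (and_tree l m (s + j * m ^ l))" if "j < m" for j
  proof (rule monotone_over_mono[OF Suc.IH])
    show "{s + j * m ^ l..<s + j * m ^ l + m ^ l} \<times> {1} \<times> {1} \<subseteq> {s..<s + m ^ Suc l} \<times> {1} \<times> {1}"
      using upt_block_subset[OF that, of s "m ^ l"] by auto
  qed
  then show ?case by simp
qed simp

lemma and_tree_bounds:
  "fsize (and_tree l m s) \<le> m ^ l \<and> depth (and_tree l m s) \<le> l \<and> and_fanin (and_tree l m s) \<le> m
    \<and> or_fanin (and_tree l m s) = 0"
proof (induction l arbitrary: s)
  case (Suc l)
  have "(\<Sum>j\<leftarrow>[0..<m]. fsize (and_tree l m (s + j * m ^ l))) \<le> length [0..<m] * m ^ l"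
    using Suc.IH by (intro sum_list_le_length_mult) auto
  moreover have "fold max (map (\<lambda>_. 0) js) 0 = (0 :: nat)" for js :: "nat list"
    by (induction js) auto
  ultimately show ?case using Suc.IH by (auto simp: o_def)
qed simp

lemma solves_sub_pmm_dnf_tower:
  assumes "set V = {1..n}" "n \<ge> 1" "m ^ d = k"
  shows "monotone_ac0 (dnf_tower d m V 1 1 1) \<and> solves_sub_pmm n k (dnf_tower d m V 1 1 1)"
proof (rule solves_sub_pmm_if_walk[OF assms(2)])
  have "1 \<in> set V"
    using assms(1,2) by simp
  then show "monotone_over (pmm_vars n k) (dnf_tower d m V 1 1 1)"
    using monotone_over_dnf_tower[of 1 V 1 1 m d] assms by (simp add: pmm_vars_def atLeastLessThanSuc_atLeastAtMost)
  show "eval \<rho> (dnf_tower d m V 1 1 1) \<longleftrightarrow> walk {1..n} (map (matrix_rel \<rho>) [1..<k + 1]) 1 1" for \<rho>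
    using eval_dnf_tower[of 1 V 1 \<rho> d m 1] \<open>1 \<in> set V\<close> assms by (simp add: add.commute)
qed

lemma solves_sub_pmm_sigma_pi_children:
  assumes "set V = {1..n}" "n \<ge> 1" "m ^ d = k"
  shows "monotone_ac0 (Or (sigma_children d m V 1 1 1)) \<and> solves_sub_pmm n k (Or (sigma_children d m V 1 1 1))"
    and "monotone_ac0 (And (pi_children d m V 1 1 1)) \<and> solves_sub_pmm n k (And (pi_children d m V 1 1 1))"
proof -
  have V: "1 \<in> set V"
    using assms(1,2) by simp
  have mono: "monotone_over (pmm_vars n k) (Or (sigma_children d m V 1 1 1))"
      "monotone_over (pmm_vars n k) (And (pi_children d m V 1 1 1))"
    using monotone_over_sigma_pi_children[OF V V, of d m 1] assms
    by (simp_all add: pmm_vars_def atLeastLessThanSuc_atLeastAtMost)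
  have eval: "eval \<rho> (Or (sigma_children d m V 1 1 1)) \<longleftrightarrow> walk {1..n} (map (matrix_rel \<rho>) [1..<k + 1]) 1 1"
      "eval \<rho> (And (pi_children d m V 1 1 1)) \<longleftrightarrow> walk {1..n} (map (matrix_rel \<rho>) [1..<k + 1]) 1 1"
    if "\<And>i. functional_on {1..n} (matrix_rel \<rho> i)" for \<rho>
    using eval_sigma_pi_children[of V \<rho>, OF _ V V, of d m 1] that assms by (simp_all add: add.commute)
  show "monotone_ac0 (Or (sigma_children d m V 1 1 1)) \<and> solves_sub_pmm n k (Or (sigma_children d m V 1 1 1))"
    using mono(1) eval(1) by (rule solves_sub_pmm_if_walk[OF assms(2)])
  show "monotone_ac0 (And (pi_children d m V 1 1 1)) \<and> solves_sub_pmm n k (And (pi_children d m V 1 1 1))"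
    using mono(2) eval(2) by (rule solves_sub_pmm_if_walk[OF assms(2)])
qed

lemma solves_sub_pmm_and_tree:
  assumes "m ^ d = k"
  shows "monotone_ac0 (and_tree d m 1) \<and> solves_sub_pmm 1 k (and_tree d m 1)"
proof (rule solves_sub_pmm_if_walk)
  show "monotone_over (pmm_vars 1 k) (and_tree d m 1)"
    using monotone_over_and_tree[of 1 m d] assms by (simp add: pmm_vars_def atLeastLessThanSuc_atLeastAtMost)
  show "eval \<rho> (and_tree d m 1) \<longleftrightarrow> walk {1..1} (map (matrix_rel \<rho>) [1..<k + 1]) 1 1" for \<rho>
    using eval_and_tree[of \<rho> d m 1] assms by (simp add: add.commute)
qed simp

lemma sub_pmm_Sigma_2d:
  assumes "n \<ge> 1" "d \<ge> 1" "m ^ d = k"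
  shows "\<exists>F. monotone_ac0 F \<and> solves_sub_pmm n k F \<and> fsize F \<le> k * n ^ (d * m)
    \<and> is_Sigma (2 * d) F \<and> and_fanin F \<le> m \<and> or_fanin F \<le> n ^ m"
proof -
  define V where "V = [1..<n + 1]"
  let ?P = "dnf_tower d m V 1 1 1"
  have V: "set V = {1..n}" "distinct V" "length V = n" "1 \<in> set V"
    using assms(1) by (auto simp: V_def)
  have power_le: "n ^ (m - 1) \<le> n ^ m"
    using assms(1) by (simp add: power_increasing)
  have "fsize ?P \<le> (m * n ^ (m - 1)) ^ d"
    using fsize_dnf_tower[OF V(2,4)] V(3) by simp
  also have "\<dots> \<le> (m * n ^ m) ^ d"
    using power_le by (intro power_mono mult_left_mono) auto
  also have "\<dots> = k * n ^ (d * m)"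
    using assms(3) by (simp add: power_mult_distrib power_mult[symmetric] mult.commute)
  finally have "fsize ?P \<le> k * n ^ (d * m)" .
  moreover have "is_Or ?P"
    using assms(2) by (cases d) auto
  then have "is_Sigma (2 * d) (pad_Or (2 * d - depth ?P) ?P)"
    using depth_dnf_tower[of d m V 1 1 1] assms(2) by (intro is_Sigma_pad_Or) auto
  moreover have "and_fanin ?P \<le> m" "or_fanin (pad_Or (2 * d - depth ?P) ?P) \<le> n ^ m"
    using fanin_dnf_tower[OF V(2), of d m 1 1 1] V(3) power_le assms(1)
    by (auto intro: or_fanin_pad_Or)
  ultimately show ?thesis
    using solves_sub_pmm_dnf_tower[OF V(1) assms(1,3)] by (intro exI[of _ "pad_Or (2 * d - depth ?P) ?P"]) simp
qed

lemma bounds_sigma_pi_formulas: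
  assumes "distinct V" "length V = n" "1 \<in> set V" "n \<ge> 2" "m \<ge> 1" "m ^ d = k"
  shows "fsize (Or (sigma_children d m V 1 1 1)) \<le> k * n ^ (d * m)"
    and "fsize (And (pi_children d m V 1 1 1)) \<le> k * n ^ (d * m)"
    and "fanin (Or (sigma_children d m V 1 1 1)) \<le> m * n ^ m"
    and "fanin (And (pi_children d m V 1 1 1)) \<le> m * n ^ m"
proof -
  have "(m * n ^ m) ^ d = k * n ^ (d * m)"
    using assms(6) by (simp add: power_mult_distrib power_mult[symmetric] mult.commute)
  then show "fsize (Or (sigma_children d m V 1 1 1)) \<le> k * n ^ (d * m)"
    and "fsize (And (pi_children d m V 1 1 1)) \<le> k * n ^ (d * m)"
    using fsize_sigma_pi_children[OF assms(1,3,3), of d m 1] assms(2) by simp_all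
  have "n ^ (m - 1) \<le> n ^ m"
    using assms(4) by (intro power_increasing) auto
  moreover have n_le: "n ^ m \<le> m * n ^ m"
    using assms(5) by simp
  ultimately have n_minus_le: "n ^ (m - 1) \<le> m * n ^ m"
    by (rule le_trans)
  have "(\<forall>f\<in>set (sigma_children d m V 1 1 1). and_fanin f \<le> m * n ^ m \<and> or_fanin f \<le> m * n ^ m)
    \<and> length (sigma_children d m V 1 1 1) \<le> n ^ (m - 1)
    \<and> (\<forall>f\<in>set (pi_children d m V 1 1 1). and_fanin f \<le> m * n ^ m \<and> or_fanin f \<le> m * n ^ m)
    \<and> length (pi_children d m V 1 1 1) \<le> n ^ m"
    using fanin_sigma_pi_children[OF assms(1) _ assms(5), of d 1 1 1] assms(2,4) by simp
  then show "fanin (Or (sigma_children d m V 1 1 1)) \<le> m * n ^ m"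
    and "fanin (And (pi_children d m V 1 1 1)) \<le> m * n ^ m"
    unfolding fanin_def by (auto intro: le_trans[OF _ n_le] le_trans[OF _ n_minus_le])
qed

lemma sub_pmm_Sigma_Suc_d:
  assumes "n \<ge> 1" "m \<ge> 1" "m ^ d = k"
  shows "\<exists>F. monotone_ac0 F \<and> solves_sub_pmm n k F \<and> fsize F \<le> k * n ^ (d * m)
    \<and> is_Sigma (d + 1) F \<and> fanin F \<le> m * n ^ m"
proof -
  obtain P where P: "monotone_ac0 P" "solves_sub_pmm n k P" "fsize P \<le> k * n ^ (d * m)"
    "depth P \<le> d + 1" "is_Or P \<or> depth P < d + 1" "and_fanin P \<le> m * n ^ m" "or_fanin P \<le> m * n ^ m"
  proof (cases "n = 1")
    case True
    then show thesis
      using that[of "and_tree d m 1"] and_tree_bounds[of d m 1] solves_sub_pmm_and_tree[OF assms(3)] assms(3)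
      by simp
  next
    case False
    define V where "V = [1..<n + 1]"
    have V: "set V = {1..n}" "distinct V" "length V = n" "1 \<in> set V"
      using assms(1) by (auto simp: V_def)
    show thesis
      using that[of "Or (sigma_children d m V 1 1 1)"] solves_sub_pmm_sigma_pi_children(1)[OF V(1) assms(1,3)]
        bounds_sigma_pi_formulas[OF V(2,3,4) _ assms(2,3)] depth_sigma_pi_children[of d m V 1 1 1] False assms(1)
      by (simp add: fanin_def)
  qed
  have "is_Sigma (d + 1) (pad_Or (d + 1 - depth P) P)"
    using P(4,5) by (rule is_Sigma_pad_Or)
  moreover have "or_fanin (pad_Or (d + 1 - depth P) P) \<le> m * n ^ m"
    using P(7) assms(1,2) by (intro or_fanin_pad_Or) (auto simp: Suc_le_eq)
  ultimately show ?thesis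
    using P by (intro exI[of _ "pad_Or (d + 1 - depth P) P"]) (simp add: fanin_def)
qed

lemma sub_pmm_Pi_Suc_d:
  assumes "n \<ge> 1" "m \<ge> 1" "m ^ d = k"
  shows "\<exists>F. monotone_ac0 F \<and> solves_sub_pmm n k F \<and> fsize F \<le> k * n ^ (d * m)
    \<and> is_Pi (d + 1) F \<and> fanin F \<le> m * n ^ m"
proof -
  obtain P where P: "monotone_ac0 P" "solves_sub_pmm n k P" "fsize P \<le> k * n ^ (d * m)"
    "depth P \<le> d + 1" "is_And P \<or> depth P < d + 1" "and_fanin P \<le> m * n ^ m" "or_fanin P \<le> m * n ^ m"
  proof (cases "n = 1")
    case True
    then show thesis
      using that[of "and_tree d m 1"] and_tree_bounds[of d m 1] solves_sub_pmm_and_tree[OF assms(3)] assms(3)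
      by simp
  next
    case False
    define V where "V = [1..<n + 1]"
    have V: "set V = {1..n}" "distinct V" "length V = n" "1 \<in> set V"
      using assms(1) by (auto simp: V_def)
    show thesis
      using that[of "And (pi_children d m V 1 1 1)"] solves_sub_pmm_sigma_pi_children(2)[OF V(1) assms(1,3)]
        bounds_sigma_pi_formulas[OF V(2,3,4) _ assms(2,3)] depth_sigma_pi_children[of d m V 1 1 1] False assms(1)
      by (simp add: fanin_def)
  qed
  have "is_Pi (d + 1) (pad_And (d + 1 - depth P) P)"
    using P(4,5) by (rule is_Pi_pad_And)
  moreover have "and_fanin (pad_And (d + 1 - depth P) P) \<le> m * n ^ m"
    using P(6) assms(1,2) by (intro and_fanin_pad_And) (auto simp: Suc_le_eq)
  ultimately show ?thesis
    using P by (intro exI[of _ "pad_And (d + 1 - depth P) P"]) (simp add: fanin_def)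
qed

theorem proposition1p3:
  fixes n k d m :: nat
  assumes "n \<ge> 1" and "k \<ge> 1" and "d \<ge> 1"
    and "m ^ d = k"
  shows "(\<exists>F. monotone_ac0 F \<and> solves_sub_pmm n k F \<and> fsize F \<le> k * n ^ (d * m)
              \<and> is_Sigma (2 * d) F \<and> and_fanin F \<le> m \<and> or_fanin F \<le> n ^ m)
       \<and> (\<exists>F. monotone_ac0 F \<and> solves_sub_pmm n k F \<and> fsize F \<le> k * n ^ (d * m)
              \<and> is_Sigma (d + 1) F \<and> fanin F \<le> m * n ^ m)
       \<and> (\<exists>F. monotone_ac0 F \<and> solves_sub_pmm n k F \<and> fsize F \<le> k * n ^ (d * m)
              \<and> is_Pi (d + 1) F \<and> fanin F \<le> m * n ^ m)"
proof -
  have "m \<ge> 1"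
    using assms(2-4) by (cases m) (auto simp: power_0_left)
  then show ?thesis
    using sub_pmm_Sigma_2d[OF assms(1,3,4)] sub_pmm_Sigma_Suc_d[OF assms(1) _ assms(4)]
      sub_pmm_Pi_Suc_d[OF assms(1) _ assms(4)]
    by blast
qed

end
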